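(* Let $f$ be the solution of the radial Loewner PDE $$\frac{\partial f}{\partial t}(z,t)=-z f'(z,t)\,\frac{e^{it}+z}{e^{it}-z},\qquad f(z,0)=z,$$ on $\mathbb{D}\times[0,\infty)$, and let $\gamma(t)=f(e^{it},t)=\phi^{-1}(e^{(i-1)t}\phi(1))$ with $\phi(z)=z(z-i)^{i-1}$. Then $\gamma$ leaves the unit circle orthogonally at $1$: $\lim_{t\to0^+}\operatorname{Arg}(1-\gamma(t))=0$.
   Context: $\mathbb{D}$ is the unit disc, $f'=\partial f/\partial z$; $\phi$ is univalent on $\mathbb{D}$ with the power defined via a holomorphic branch of $\log(z-i)$ on $\mathbb{D}$. $\operatorname{Arg}$ denotes the principal argument. *)

theory Defs
  imports "HOL-Analysis.Analysis"
begin

text \<open>phi(z) = z (z - i)^(i - 1), the power taken via the principal logarithm of z - i,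
  which is holomorphic on the unit disc (z - i lies in the open lower half plane there)
  and continuous up to z = 1.\<close>
definition phi :: "complex \<Rightarrow> complex" where
  "phi z = z * (z - \<i>) powr (\<i> - 1)"

definition gamma :: "real \<Rightarrow> complex" where
  "gamma t = inv_into (ball 0 1) phi (exp ((\<i> - 1) * complex_of_real t) * phi 1)"

end

theory Submission
  imports Defs
begin

text \<open>
  For \<open>Re w < 0\<close>, \<open>phi_lift w = w + (\<i> - 1) Ln (e^w - \<i>)\<close> is a logarithm of \<open>phi (e^w)\<close>
  whose derivative, rotated by \<open>1 + \<i>\<close>, has positive real part. So \<open>phi_lift\<close> is injective on the
  left half plane (Noshiro-Warschawski), and since it commutes with translation by \<open>2 \<pi> \<i>\<close>,
  \<open>phi\<close> is injective on the disc. Near 1 a logarithm of \<open>phi z / phi 1\<close> is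
  \<open>(\<i> - 1) (z - 1)^2 / 4 + O(\<bar>z - 1\<bar>^3)\<close>, so Brouwer's fixed point theorem solves
  \<open>phi z = e^((\<i> - 1) t) phi 1\<close> by some \<open>z = 1 - 2 \<surd>t + o(\<surd>t)\<close> in the disc. By injectivity
  this \<open>z\<close> is \<open>gamma t\<close>, so \<open>1 - gamma t\<close> is asymptotic to the positive number \<open>2 \<surd>t\<close>.
\<close>

lemma inj_on_if_Re_deriv_pos:
  fixes f f' :: "complex \<Rightarrow> complex"
  assumes "convex S"
    and deriv: "\<And>z. z \<in> S \<Longrightarrow> (f has_field_derivative f' z) (at z)"
    and pos: "\<And>z. z \<in> S \<Longrightarrow> Re (f' z) > 0"
  shows "inj_on f S"
proof (rule inj_onI, rule ccontr)
  fix a b assume a: "a \<in> S" and b: "b \<in> S" and eq: "f a = f b" and "a \<noteq> b"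
  define g where "g x = Re (f (a + of_real x * (b - a)) / (b - a))" for x :: real
  have "g 0 < g 1"
  proof (rule DERIV_pos_imp_increasing[where f=g])
    fix x :: real assume x: "0 \<le> x" "x \<le> 1"
    define z where "z = a + of_real x * (b - a)"
    have "z = (1 - x) *\<^sub>R a + x *\<^sub>R b"
      by (simp add: z_def scaleR_conv_of_real algebra_simps)
    then have zS: "z \<in> S" using convexD_alt[OF assms(1) a b x] by simp
    have "((\<lambda>w. f (a + w * (b - a)) / (b - a)) has_field_derivative f' z) (at (of_real x))"
      using deriv[OF zS] \<open>a \<noteq> b\<close> unfolding z_def
      by (auto intro!: derivative_eq_intros DERIV_chain2[where f=f])
    then have "(g has_field_derivative Re (f' z)) (at x)"
      using has_field_derivative_Re has_vector_derivative_real_field unfolding g_def [abs_def]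
      by blast
    then show "\<exists>y. DERIV g x :> y \<and> 0 < y" using pos[OF zS] by blast
  qed simp
  moreover have "g 0 = g 1" using eq by (simp add: g_def)
  ultimately show False by simp
qed

lemma minus_i_notin_nonpos_Reals: "Im u < 1 \<Longrightarrow> u - \<i> \<notin> \<real>\<^sub>\<le>\<^sub>0"
  by (auto simp: complex_nonpos_Reals_iff)

definition phi_lift :: "complex \<Rightarrow> complex" where
  "phi_lift w = w + (\<i> - 1) * Ln (exp w - \<i>)"

lemma phi_lift_has_field_derivative:
  assumes "Re w < 0"
  shows "(phi_lift has_field_derivative (1 + (\<i> - 1) * exp w / (exp w - \<i>))) (at w)"
proof -
  have "Im (exp w) \<le> exp (Re w)" "exp (Re w) < 1"
    using abs_Im_le_cmod[of "exp w"] assms by auto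
  then have "Im (exp w) < 1" by linarith
  then have "exp w - \<i> \<notin> \<real>\<^sub>\<le>\<^sub>0" by (rule minus_i_notin_nonpos_Reals)
  then show ?thesis
    unfolding phi_lift_def [abs_def]
    by (auto intro!: derivative_eq_intros simp: diff_divide_distrib divide_inverse algebra_simps)
qed

lemma Re_rotated_phi_lift_deriv:
  assumes "u \<noteq> \<i>"
  shows "Re ((1 + \<i>) * (1 + (\<i> - 1) * u / (u - \<i>))) = (1 - (norm u)\<^sup>2) / (norm (u - \<i>))\<^sup>2"
proof -
  have eq: "(1 + \<i>) * (1 + (\<i> - 1) * u / (u - \<i>)) = (\<i> - 1) * (u - 1) / (u - \<i>)"
    using assms by (simp add: field_simps)
  have num: "Re ((\<i> - 1) * (u - 1)) * Re (u - \<i>) + Im ((\<i> - 1) * (u - 1)) * Im (u - \<i>)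
      = 1 - (norm u)\<^sup>2"
    using cmod_power2[of u] by (simp add: algebra_simps power2_eq_square)
  show ?thesis by (simp only: eq Re_divide' num)
qed

lemma inj_on_phi_lift: "inj_on phi_lift {w. Re w < 0}"
proof -
  have "inj_on (\<lambda>w. (1 + \<i>) * phi_lift w) {w. Re w < 0}"
  proof (rule inj_on_if_Re_deriv_pos[OF convex_halfspace_Re_lt])
    fix w assume "w \<in> {w. Re w < 0}"
    then have w: "Re w < 0" and "norm (exp w) < 1" by auto
    then have "(norm (exp w))\<^sup>2 < 1" by (simp add: power_less_one_iff)
    moreover have "exp w \<noteq> \<i>" using \<open>norm (exp w) < 1\<close> by (metis norm_ii order_less_irrefl)
    ultimately have "(1 - (norm (exp w))\<^sup>2) / (norm (exp w - \<i>))\<^sup>2 > 0"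
      by (intro divide_pos_pos) auto
    then show "Re ((1 + \<i>) * (1 + (\<i> - 1) * exp w / (exp w - \<i>))) > 0"
      by (simp only: Re_rotated_phi_lift_deriv[OF \<open>exp w \<noteq> \<i>\<close>])
    show "((\<lambda>w. (1 + \<i>) * phi_lift w) has_field_derivative
        (1 + \<i>) * (1 + (\<i> - 1) * exp w / (exp w - \<i>))) (at w)"
      by (rule DERIV_cmult[OF phi_lift_has_field_derivative[OF w]])
  qed
  then show ?thesis by (auto simp: inj_on_def)
qed

lemma phi_lift_add_2pi:
  "phi_lift (w + \<i> * (of_int n * (of_real pi * 2))) = phi_lift w + \<i> * (of_int n * (of_real pi * 2))"
  by (simp add: phi_lift_def)

lemma phi_eq_exp_phi_lift: "z \<noteq> 0 \<Longrightarrow> z \<noteq> \<i> \<Longrightarrow> phi z = exp (phi_lift (Ln z))"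
  by (simp add: phi_def powr_def phi_lift_def exp_add)

lemma inj_on_phi: "inj_on phi (ball 0 1)"
proof (rule inj_onI)
  fix z1 z2 assume z1: "z1 \<in> ball 0 1" and z2: "z2 \<in> ball 0 1" and eq: "phi z1 = phi z2"
  have ni: "z1 \<noteq> \<i>" "z2 \<noteq> \<i>" using z1 z2 by auto
  show "z1 = z2"
  proof (cases "z1 = 0 \<or> z2 = 0")
    case True
    then show ?thesis using eq ni by (auto simp: phi_def powr_def)
  next
    case False
    then have nz: "z1 \<noteq> 0" "z2 \<noteq> 0" by auto
    have Re_Ln: "Re (Ln z1) < 0" "Re (Ln z2) < 0" using z1 z2 nz by (simp_all add: Re_Ln)
    have "exp (phi_lift (Ln z1)) = exp (phi_lift (Ln z2))"
      using eq by (simp add: phi_eq_exp_phi_lift nz ni)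
    then obtain n :: int where "phi_lift (Ln z1) = phi_lift (Ln z2) + \<i> * (of_int n * (of_real pi * 2))"
      by (auto simp: exp_eq algebra_simps)
    also have "\<dots> = phi_lift (Ln z2 + \<i> * (of_int n * (of_real pi * 2)))"
      by (rule phi_lift_add_2pi [symmetric])
    finally have "Ln z1 = Ln z2 + \<i> * (of_int n * (of_real pi * 2))"
      using inj_on_phi_lift Re_Ln by (auto dest: inj_onD)
    then have "exp (Ln z1) = exp (Ln z2)" by simp
    then show ?thesis using nz by simp
  qed
qed

definition log_phi_ratio :: "complex \<Rightarrow> complex" where
  "log_phi_ratio z = Ln z + (\<i> - 1) * Ln (z - \<i>) - (\<i> - 1) * Ln (1 - \<i>)"

definition log_phi_ratio_rem :: "complex \<Rightarrow> complex" where
  "log_phi_ratio_rem z = log_phi_ratio z - (\<i> - 1) / 4 * (z - 1)\<^sup>2"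

lemma phi_eq_exp_log_phi_ratio: "z \<noteq> 0 \<Longrightarrow> z \<noteq> \<i> \<Longrightarrow> phi z = exp (log_phi_ratio z) * phi 1"
  by (simp add: phi_def powr_def log_phi_ratio_def exp_add exp_diff)

lemma Re_pos_Im_lt_one_if_near_one:
  assumes "norm (w - 1) \<le> 1/2"
  shows "Re w > 0" "Im w < 1"
  using abs_Re_le_cmod[of "w - 1"] abs_Im_le_cmod[of "w - 1"] assms by (simp_all add: abs_le_iff)

lemma log_phi_ratio_rem_has_field_derivative:
  assumes "Re w > 0" "Im w < 1"
  shows "(log_phi_ratio_rem has_field_derivative
            (1 - \<i>) * (w - 1)\<^sup>2 * (w + 1 - \<i>) / (2 * w * (w - \<i>))) (at w)"
proof -
  have np: "w \<notin> \<real>\<^sub>\<le>\<^sub>0" "w - \<i> \<notin> \<real>\<^sub>\<le>\<^sub>0"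
    using assms minus_i_notin_nonpos_Reals by (auto simp: complex_nonpos_Reals_iff)
  then have nz: "w \<noteq> 0" "w - \<i> \<noteq> 0" by auto
  have "(log_phi_ratio_rem has_field_derivative
          inverse w + (\<i> - 1) * inverse (w - \<i>) - (\<i> - 1) / 4 * (2 * (w - 1))) (at w)"
    unfolding log_phi_ratio_rem_def [abs_def] log_phi_ratio_def
    using np by (auto intro!: derivative_eq_intros)
  moreover have "inverse w + (\<i> - 1) * inverse (w - \<i>) - (\<i> - 1) / 4 * (2 * (w - 1))
      = (1 - \<i>) * (w - 1)\<^sup>2 * (w + 1 - \<i>) / (2 * w * (w - \<i>))"
    using nz by (simp add: field_simps) (simp add: algebra_simps power2_eq_square)
  ultimately show ?thesis by simp
qed

lemma norm_log_phi_ratio_rem_deriv_le: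
  assumes "norm (w - 1) \<le> 1/2"
  shows "norm ((1 - \<i>) * (w - 1)\<^sup>2 * (w + 1 - \<i>) / (2 * w * (w - \<i>))) \<le> 16 * (norm (w - 1))\<^sup>2"
proof -
  have re: "\<bar>Re w - 1\<bar> \<le> 1/2" using abs_Re_le_cmod[of "w - 1"] assms by simp
  have im: "\<bar>Im w\<bar> \<le> 1/2" using abs_Im_le_cmod[of "w - 1"] assms by simp
  have n1: "norm (w + 1 - \<i>) \<le> 4"
    using cmod_le[of "w + 1 - \<i>"] re im by (simp add: abs_le_iff, linarith)
  have n2: "norm (1 - \<i>) \<le> 2" using cmod_le[of "1 - \<i>"] by simp
  have "norm w \<ge> 1/2" using abs_Re_le_cmod[of w] re by (simp add: abs_le_iff, linarith)
  moreover have "norm (w - \<i>) \<ge> 1/2" using abs_Im_le_cmod[of "w - \<i>"] im by simp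
  ultimately have "norm w * norm (w - \<i>) \<ge> 1/2 * (1/2)" by (intro mult_mono) auto
  then have "norm (2 * w * (w - \<i>)) \<ge> 1/2" by (simp add: norm_mult)
  then have "norm ((1 - \<i>) * (w - 1)\<^sup>2 * (w + 1 - \<i>) / (2 * w * (w - \<i>)))
      \<le> 2 * (norm (w - 1))\<^sup>2 * 4 / (1/2)"
    unfolding norm_divide norm_mult norm_power
    by (intro frac_le mult_mono n1 n2) auto
  then show ?thesis by simp
qed

lemma norm_log_phi_ratio_rem_le:
  assumes "norm (z - 1) \<le> 1/2"
  shows "norm (log_phi_ratio_rem z) \<le> 16 * (norm (z - 1))^3"
proof -
  define r where "r = norm (z - 1)"
  have "norm (log_phi_ratio_rem z - log_phi_ratio_rem 1) \<le> 16 * r\<^sup>2 * norm (z - 1)"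
  proof (rule field_differentiable_bound[where S="cball 1 r"])
    fix w :: complex assume "w \<in> cball 1 r"
    then have wr: "norm (w - 1) \<le> r" by (simp add: dist_norm norm_minus_commute)
    then have w: "norm (w - 1) \<le> 1/2" using assms r_def by simp
    show "(log_phi_ratio_rem has_field_derivative
            (1 - \<i>) * (w - 1)\<^sup>2 * (w + 1 - \<i>) / (2 * w * (w - \<i>))) (at w within cball 1 r)"
      using log_phi_ratio_rem_has_field_derivative Re_pos_Im_lt_one_if_near_one[OF w]
        has_field_derivative_at_within by blast
    have "norm ((1 - \<i>) * (w - 1)\<^sup>2 * (w + 1 - \<i>) / (2 * w * (w - \<i>))) \<le> 16 * (norm (w - 1))\<^sup>2"
      by (rule norm_log_phi_ratio_rem_deriv_le[OF w])
    also have "\<dots> \<le> 16 * r\<^sup>2" using wr by (simp add: power_mono)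
    finally show "norm ((1 - \<i>) * (w - 1)\<^sup>2 * (w + 1 - \<i>) / (2 * w * (w - \<i>))) \<le> 16 * r\<^sup>2" .
  qed (auto simp: r_def dist_norm norm_minus_commute)
  moreover have "log_phi_ratio_rem 1 = 0" by (simp add: log_phi_ratio_rem_def log_phi_ratio_def)
  ultimately show ?thesis by (simp add: r_def power3_eq_cube power2_eq_square mult.assoc)
qed

lemma norm_csqrt_diff_le:
  assumes "0 < r" "norm (x - of_real (r\<^sup>2)) \<le> d"
  shows "norm (csqrt x - of_real r) \<le> d / r"
proof -
  have "r \<le> Re (csqrt x + of_real r)" using Re_csqrt[of x] by simp
  also have "\<dots> \<le> norm (csqrt x + of_real r)" by (rule complex_Re_le_cmod)
  finally have "norm (csqrt x - of_real r) * r \<le> norm (csqrt x - of_real r) * norm (csqrt x + of_real r)"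
    by (intro mult_left_mono) auto
  also have "\<dots> = norm (x - of_real (r\<^sup>2))"
    by (simp add: norm_mult [symmetric] algebra_simps power2_eq_square [symmetric])
  also have "\<dots> \<le> d" by (rule assms(2))
  finally show ?thesis using assms(1) by (simp add: field_simps)
qed

lemma norm_log_phi_ratio_rem_le_near_start:
  assumes e: "0 < e" "e \<le> 1/2" and s: "0 < s" "s \<le> e/1000"
    and z: "norm (z - of_real (1 - 2 * s)) \<le> e * s"
  shows "norm (z - 1) \<le> 1/2" "norm (log_phi_ratio_rem z) \<le> e * s\<^sup>2 / 2"
proof -
  have "norm (z - 1) \<le> norm (z - of_real (1 - 2 * s)) + norm (of_real (1 - 2 * s) - 1 :: complex)"
    using norm_triangle_ineq[of "z - of_real (1 - 2 * s)" "of_real (1 - 2 * s) - 1"] by simp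
  also have "norm (of_real (1 - 2 * s) - 1 :: complex) = 2 * s" using s by simp
  finally have "norm (z - 1) \<le> e * s + 2 * s" using z by linarith
  moreover have "e * s \<le> 1 * s" using e s by (intro mult_right_mono) auto
  ultimately have z3: "norm (z - 1) \<le> 3 * s" by simp
  then show z2: "norm (z - 1) \<le> 1/2" using e s by simp
  have "norm (log_phi_ratio_rem z) \<le> 16 * (norm (z - 1))^3"
    by (rule norm_log_phi_ratio_rem_le[OF z2])
  also have "\<dots> \<le> 16 * (3 * s)^3" using z3 by (intro mult_left_mono power_mono) auto
  also have "\<dots> = 432 * s * s\<^sup>2" by (simp add: power2_eq_square power3_eq_cube)
  also have "\<dots> \<le> e / 2 * s\<^sup>2" using s e by (intro mult_right_mono) auto
  finally show "norm (log_phi_ratio_rem z) \<le> e * s\<^sup>2 / 2" by simp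
qed

lemma log_phi_ratio_solvable_near_start:
  assumes e: "0 < e" "e \<le> 1/2" and s: "0 < s" "s \<le> e/1000"
  shows "\<exists>z. norm (z - of_real (1 - 2 * s)) \<le> e * s \<and> log_phi_ratio z = (\<i> - 1) * of_real (s\<^sup>2)"
proof -
  define a :: complex where "a = (\<i> - 1) / 4"
  define c :: complex where "c = of_real (1 - 2 * s)"
  \<comment> \<open>\<open>log_phi_ratio z = 4 a s\<^sup>2\<close> iff \<open>(z - 1)\<^sup>2 = 4 s\<^sup>2 - log_phi_ratio_rem z / a\<close>;
      the branch of the square root puts \<open>z\<close> next to \<open>1 - 2s\<close>.\<close>
  define T where "T z = 1 - csqrt (of_real (4 * s\<^sup>2) - log_phi_ratio_rem z / a)" for z
  have anz: "a \<noteq> 0" by (simp add: a_def)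
  have small: "norm (z - 1) \<le> 1/2 \<and> norm (log_phi_ratio_rem z / a) \<le> 2 * e * s\<^sup>2"
    if "z \<in> cball c (e * s)" for z
  proof -
    have z: "norm (z - of_real (1 - 2 * s)) \<le> e * s"
      using that by (simp add: c_def dist_norm norm_minus_commute)
    have "norm a \<ge> 1/4" using abs_Re_le_cmod[of a] by (simp add: a_def)
    then have "norm (log_phi_ratio_rem z / a) \<le> e * s\<^sup>2 / 2 / (1/4)"
      unfolding norm_divide using norm_log_phi_ratio_rem_le_near_start(2)[OF e s z] e
      by (intro frac_le) auto
    then show ?thesis using norm_log_phi_ratio_rem_le_near_start(1)[OF e s z] by simp
  qed
  have "continuous_on (cball c (e * s)) T"
  proof (rule continuous_at_imp_continuous_on, rule ballI)
    fix z assume z: "z \<in> cball c (e * s)"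
    have "isCont log_phi_ratio_rem z"
      using log_phi_ratio_rem_has_field_derivative Re_pos_Im_lt_one_if_near_one small[OF z]
        DERIV_isCont by blast
    moreover have "of_real (4 * s\<^sup>2) - log_phi_ratio_rem z / a \<notin> \<real>\<^sub>\<le>\<^sub>0"
    proof -
      have "Re (log_phi_ratio_rem z / a) \<le> 2 * e * s\<^sup>2"
        using small[OF z] abs_Re_le_cmod[of "log_phi_ratio_rem z / a"] by linarith
      moreover have "2 * e * s\<^sup>2 < 4 * s\<^sup>2" using e s by simp
      ultimately show ?thesis by (auto simp: complex_nonpos_Reals_iff)
    qed
    ultimately have "isCont (\<lambda>x. csqrt (of_real (4 * s\<^sup>2) - log_phi_ratio_rem x / a)) z"
      using anz by (intro isCont_csqrt') (auto intro!: continuous_intros)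
    then show "isCont T z" unfolding T_def by (auto intro!: continuous_intros)
  qed
  moreover have "T \<in> cball c (e * s) \<rightarrow> cball c (e * s)"
  proof
    fix z assume z: "z \<in> cball c (e * s)"
    have "norm (of_real (4 * s\<^sup>2) - log_phi_ratio_rem z / a - of_real ((2 * s)\<^sup>2)) \<le> 2 * e * s\<^sup>2"
      using small[OF z] by (simp add: power2_eq_square)
    then have "norm (csqrt (of_real (4 * s\<^sup>2) - log_phi_ratio_rem z / a) - of_real (2 * s))
        \<le> 2 * e * s\<^sup>2 / (2 * s)"
      using s by (intro norm_csqrt_diff_le) auto
    also have "\<dots> = e * s" using s by (simp add: power2_eq_square)
    finally show "T z \<in> cball c (e * s)"
      by (simp add: T_def c_def dist_norm norm_minus_commute algebra_simps)
  qed
  ultimately obtain z where z: "z \<in> cball c (e * s)" and "T z = z"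
    using brouwer_ball[of "e * s" c T] e s by auto
  then have "csqrt (of_real (4 * s\<^sup>2) - log_phi_ratio_rem z / a) = 1 - z"
    by (simp add: T_def algebra_simps)
  then have "of_real (4 * s\<^sup>2) - log_phi_ratio_rem z / a = (1 - z)\<^sup>2" by (metis power2_csqrt)
  then have "log_phi_ratio_rem z = a * (of_real (4 * s\<^sup>2) - (z - 1)\<^sup>2)"
    using anz by (simp add: field_simps power2_commute)
  then have "4 * log_phi_ratio z = 4 * ((\<i> - 1) * of_real (s\<^sup>2))"
    by (simp add: log_phi_ratio_rem_def a_def algebra_simps)
  then have "log_phi_ratio z = (\<i> - 1) * of_real (s\<^sup>2)" by simp
  then show ?thesis using z by (auto simp: c_def dist_norm norm_minus_commute)
qed

lemma norm_one_minus_gamma_sub_le: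
  assumes e: "0 < e" "e \<le> 1/2" and t: "0 < t" "sqrt t \<le> e/1000"
  shows "norm ((1 - gamma t) - of_real (2 * sqrt t)) \<le> e * sqrt t"
proof -
  define s where "s = sqrt t"
  have s: "0 < s" "s \<le> e/1000" using t by (auto simp: s_def)
  obtain z where zc: "norm (z - of_real (1 - 2 * s)) \<le> e * s"
    and log_z: "log_phi_ratio z = (\<i> - 1) * of_real t"
    using log_phi_ratio_solvable_near_start[OF e s] t by (auto simp: s_def)
  have "0 \<le> 1 - 2 * s" using s e by simp
  then have "norm (of_real (1 - 2 * s) :: complex) = 1 - 2 * s"
    by (simp only: norm_of_real abs_of_nonneg)
  moreover have "e * s \<le> 1 * s" using e s by (intro mult_right_mono) auto
  moreover have "norm z \<le> norm (z - of_real (1 - 2 * s)) + norm (of_real (1 - 2 * s) :: complex)"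
    using norm_triangle_ineq[of "z - of_real (1 - 2 * s)" "of_real (1 - 2 * s)"] by simp
  ultimately have "norm z < 1" using zc s by linarith
  then have "z \<in> ball 0 1" by simp
  have "z \<noteq> 0" "z \<noteq> \<i>"
    using Re_pos_Im_lt_one_if_near_one[OF norm_log_phi_ratio_rem_le_near_start(1)[OF e s zc]]
    by auto
  from phi_eq_exp_log_phi_ratio[OF this] have "phi z = exp ((\<i> - 1) * of_real t) * phi 1"
    unfolding log_z .
  then have "gamma t = inv_into (ball 0 1) phi (phi z)" by (simp add: gamma_def)
  also have "\<dots> = z" by (rule inv_into_f_f[OF inj_on_phi \<open>z \<in> ball 0 1\<close>])
  finally show ?thesis using zc by (simp add: s_def norm_minus_commute algebra_simps)
qed

lemma one_minus_gamma_asymptotic: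
  "((\<lambda>t. (1 - gamma t) / of_real (2 * sqrt t)) \<longlongrightarrow> 1) (at_right 0)"
proof (rule tendstoI)
  fix e :: real assume "0 < e"
  define e' where "e' = min (1/2) e"
  have e': "0 < e'" "e' \<le> 1/2" "e' \<le> e" using \<open>0 < e\<close> by (auto simp: e'_def)
  have "dist ((1 - gamma t) / of_real (2 * sqrt t)) 1 < e" if t: "0 < t" "t < (e'/1000)\<^sup>2" for t
  proof -
    have "sqrt t < sqrt ((e'/1000)\<^sup>2)" using t by (intro real_sqrt_less_mono)
    then have "sqrt t \<le> e'/1000" using e' by simp
    then have close: "norm ((1 - gamma t) - of_real (2 * sqrt t)) \<le> e' * sqrt t"
      by (rule norm_one_minus_gamma_sub_le[OF e'(1,2) t(1)])
    have sp: "0 < sqrt t" using t by simp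
    then have "(1 - gamma t) / of_real (2 * sqrt t) - 1
        = ((1 - gamma t) - of_real (2 * sqrt t)) / of_real (2 * sqrt t)"
      by (simp add: field_simps)
    then have "dist ((1 - gamma t) / of_real (2 * sqrt t)) 1
        = norm ((1 - gamma t) - of_real (2 * sqrt t)) / (2 * sqrt t)"
      using sp by (simp add: dist_norm norm_divide)
    also have "\<dots> \<le> e' * sqrt t / (2 * sqrt t)" using close sp by (intro divide_right_mono) auto
    also have "\<dots> < e" using e' sp by simp
    finally show ?thesis .
  qed
  moreover have "(0::real) < (e'/1000)\<^sup>2" using e' by simp
  ultimately show "\<forall>\<^sub>F t in at_right 0. dist ((1 - gamma t) / of_real (2 * sqrt t)) 1 < e"
    unfolding eventually_at_right_field by blast
qed

theorem proposition3p2: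
  shows "((\<lambda>t. Arg (1 - gamma t)) \<longlongrightarrow> 0) (at_right 0)"
proof -
  have "isCont Arg 1" by (rule continuous_at_Arg) (simp add: complex_nonpos_Reals_iff)
  then have "((\<lambda>t. Arg ((1 - gamma t) / of_real (2 * sqrt t))) \<longlongrightarrow> Arg 1) (at_right 0)"
    by (rule isCont_tendsto_compose[OF _ one_minus_gamma_asymptotic])
  moreover have "\<forall>\<^sub>F t in at_right 0. Arg ((1 - gamma t) / of_real (2 * sqrt t)) = Arg (1 - gamma t)"
    using eventually_at_right_less[of "0::real"]
  proof (rule eventually_mono)
    fix t :: real assume "0 < t"
    then show "Arg ((1 - gamma t) / of_real (2 * sqrt t)) = Arg (1 - gamma t)"
      using Arg_times_of_real[of "1 / (2 * sqrt t)" "1 - gamma t"] by (simp add: field_simps)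
  qed
  ultimately show ?thesis by (simp add: tendsto_cong)
qed

end
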